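(* Let $\mathbf{F}$ be a Baire foliage tree on a topological space $X$, let $p\in X$ and $v\in\mathrm{scope}_{\mathbf{F}}(p)$. Then there is a foliage tree $\mathbf{G}$ such that: (d1) $0_{\mathbf{G}}=v$ and $\max\mathbf{G}=\mathrm{sons}_{\mathbf{G}}(0_{\mathbf{G}})$; (d2) $\mathbf{G}_v=\mathbf{F}_v\setminus\{p\}$, and $\mathbf{G}_v$ is the union of the pairwise disjoint sets $\mathbf{F}_m$, $m\in\max\mathbf{G}$; (d3) $\mathbf{G}$ is a foliage graft for $\mathbf{F}$; (d4) $\mathrm{impl}\,\mathbf{G}=\varnothing$; (d5) $\mathbf{G}$ is $\omega$-branching, locally strict, open in $X$, has bounded chains, and has height $2$.
   Context: $\omega=\{0,1,2,\dots\}$, ${}^{<\omega}\omega$ is the set of finite sequences of natural numbers. A tree is a strict partial order in which the set of predecessors of every node is well-ordered; $\mathrm{height}(x)$ is the ordinal isomorphic to the set of predecessors of $x$; the height of a tree is the least ordinal $\beta$ such that no node has height $\beta$; a branch is a maximal chain; $\mathrm{sons}(x)$ is the set of immediate successors of $x$; $\max$ is the set of maximal nodes; $0$ denotes the least node. A tree is $\omega$-branching if every non-maximal node has exactly $\omega$ many sons; it has bounded chains if every nonempty chain $C$ has a node $v$ with $c\leq v$ for all $c\in C$. A foliage tree is a pair $\mathbf{F}=(T,l)$ with $T$ a tree (skeleton) and $l$ a function on its nodes, $\mathbf{F}_x:=l(x)$; tree notions apply via the skeleton; $\mathrm{scope}_{\mathbf{F}}(p)=\{x:p\in\mathbf{F}_x\}$.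 $\mathbf{F}$ is nonincreasing if $y\geq x$ implies $\mathbf{F}_y\subseteq\mathbf{F}_x$. $\mathbf{F}$ is locally strict if each non-maximal leaf $\mathbf{F}_x$ is the disjoint union of $\mathbf{F}_s$, $s\in\mathrm{sons}(x)$; has strict branches if it has a node and for each branch $B$, $\bigcap_{x\in B}\mathbf{F}_x$ is a singleton; is open in $X$ if all leaves are open in $X$; is a foliage $\omega,\omega$-tree if its skeleton is order-isomorphic to $({}^{<\omega}\omega,\subsetneq)$. A Baire foliage tree on $X$ is an open in $X$, locally strict foliage $\omega,\omega$-tree with strict branches and $\mathbf{F}_{0_{\mathbf{F}}}=X$. A tree $\mathcal{G}$ is a graft for a tree $\mathcal{T}$ if $\mathcal{G}$ has more than one node, has a least node $0_{\mathcal{G}}$, the common nodes of $\mathcal{G}$ and $\mathcal{T}$ are exactly $\{0_{\mathcal{G}}\}\cup\max\mathcal{G}$, and for common nodes $x,y$: $x<_{\mathcal{G}}y$ iff $x<_{\mathcal{T}}y$. $\mathrm{impl}\,\mathcal{G}$ is the set of nodes of $\mathcal{G}$ other than $0_{\mathcal{G}}$ and the maximal ones. For a nonincreasing foliage tree $\mathbf{F}$, a foliage graft for $\mathbf{F}$ is a nonincreasing foliage tree $\mathbf{G}$ whose skeleton is a graft for the skeleton of $\mathbf{F}$, with $\mathbf{G}_{0_{\mathbf{G}}}\subseteq\mathbf{F}_{0_{\mathbf{G}}}$ and $\mathbf{G}_m=\mathbf{F}_m$ for all $m\in\max\mathbf{G}$. *)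

theory Defs
  imports "HOL-Analysis.Analysis" "HOL-Library.Sublist"
begin

text \<open>A foliage tree: a skeleton (node set with strict order) and a leaf function.
  Node and point types are type variables; grafts live on the same node type as the tree.\<close>

record ('n, 'x) ftree =
  nodes :: "'n set"
  less  :: "'n \<Rightarrow> 'n \<Rightarrow> bool"
  leaf  :: "'n \<Rightarrow> 'x set"

definition preds :: "('n, 'x) ftree \<Rightarrow> 'n \<Rightarrow> 'n set" where
  "preds F x = {y \<in> nodes F. less F y x}"

definition leq :: "('n, 'x) ftree \<Rightarrow> 'n \<Rightarrow> 'n \<Rightarrow> bool" where
  "leq F x y \<longleftrightarrow> x = y \<or> less F x y"

definition is_tree :: "('n, 'x) ftree \<Rightarrow> bool" where
  "is_tree F \<longleftrightarrow>
     (\<forall>x\<in>nodes F. \<not> less F x x) \<and>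
     (\<forall>x\<in>nodes F. \<forall>y\<in>nodes F. \<forall>z\<in>nodes F. less F x y \<longrightarrow> less F y z \<longrightarrow> less F x z) \<and>
     (\<forall>x\<in>nodes F.
        (\<forall>y\<in>preds F x. \<forall>z\<in>preds F x. y = z \<or> less F y z \<or> less F z y) \<and>
        (\<forall>S. S \<subseteq> preds F x \<longrightarrow> S \<noteq> {} \<longrightarrow> (\<exists>m\<in>S. \<forall>s\<in>S. leq F m s)))"

definition node_height_is :: "('n, 'x) ftree \<Rightarrow> 'n \<Rightarrow> nat \<Rightarrow> bool" where
  "node_height_is F x k \<longleftrightarrow> finite (preds F x) \<and> card (preds F x) = k"

definition tree_height_is :: "('n, 'x) ftree \<Rightarrow> nat \<Rightarrow> bool" where
  "tree_height_is F n \<longleftrightarrow>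
     (\<forall>k<n. \<exists>x\<in>nodes F. node_height_is F x k) \<and> \<not> (\<exists>x\<in>nodes F. node_height_is F x n)"

definition chain :: "('n, 'x) ftree \<Rightarrow> 'n set \<Rightarrow> bool" where
  "chain F C \<longleftrightarrow> C \<subseteq> nodes F \<and> (\<forall>x\<in>C. \<forall>y\<in>C. x = y \<or> less F x y \<or> less F y x)"

definition branch :: "('n, 'x) ftree \<Rightarrow> 'n set \<Rightarrow> bool" where
  "branch F B \<longleftrightarrow> chain F B \<and> (\<forall>C. chain F C \<longrightarrow> B \<subseteq> C \<longrightarrow> C = B)"

definition sons :: "('n, 'x) ftree \<Rightarrow> 'n \<Rightarrow> 'n set" where
  "sons F x = {y \<in> nodes F. less F x y \<and> \<not> (\<exists>z\<in>nodes F. less F x z \<and> less F z y)}"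

definition maxs :: "('n, 'x) ftree \<Rightarrow> 'n set" where
  "maxs F = {x \<in> nodes F. \<not> (\<exists>y\<in>nodes F. less F x y)}"

definition is_root :: "('n, 'x) ftree \<Rightarrow> 'n \<Rightarrow> bool" where
  "is_root F r \<longleftrightarrow> r \<in> nodes F \<and> (\<forall>x\<in>nodes F. leq F r x)"

definition root :: "('n, 'x) ftree \<Rightarrow> 'n" where
  "root F = (THE r. is_root F r)"

definition omega_branching :: "('n, 'x) ftree \<Rightarrow> bool" where
  "omega_branching F \<longleftrightarrow>
     (\<forall>x \<in> nodes F - maxs F. infinite (sons F x) \<and> countable (sons F x))"

definition bounded_chains :: "('n, 'x) ftree \<Rightarrow> bool" where
  "bounded_chains F \<longleftrightarrow>
     (\<forall>C. chain F C \<longrightarrow> C \<noteq> {} \<longrightarrow> (\<exists>v\<in>nodes F. \<forall>c\<in>C. leq F c v))"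

definition scope :: "('n, 'x) ftree \<Rightarrow> 'x \<Rightarrow> 'n set" where
  "scope F p = {x \<in> nodes F. p \<in> leaf F x}"

definition nonincreasing :: "('n, 'x) ftree \<Rightarrow> bool" where
  "nonincreasing F \<longleftrightarrow>
     (\<forall>x\<in>nodes F. \<forall>y\<in>nodes F. leq F x y \<longrightarrow> leaf F y \<subseteq> leaf F x)"

definition locally_strict :: "('n, 'x) ftree \<Rightarrow> bool" where
  "locally_strict F \<longleftrightarrow>
     (\<forall>x \<in> nodes F - maxs F.
        leaf F x = (\<Union>s\<in>sons F x. leaf F s) \<and>
        (\<forall>s\<in>sons F x. \<forall>t\<in>sons F x. s \<noteq> t \<longrightarrow> leaf F s \<inter> leaf F t = {}))"

definition strict_branches :: "('n, 'x) ftree \<Rightarrow> bool" where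
  "strict_branches F \<longleftrightarrow> nodes F \<noteq> {} \<and>
     (\<forall>B. branch F B \<longrightarrow> (\<exists>q. (\<Inter>x\<in>B. leaf F x) = {q}))"

definition open_in_space :: "'x topology \<Rightarrow> ('n, 'x) ftree \<Rightarrow> bool" where
  "open_in_space X F \<longleftrightarrow> (\<forall>x\<in>nodes F. openin X (leaf F x))"

definition omega_omega :: "('n, 'x) ftree \<Rightarrow> bool" where
  "omega_omega F \<longleftrightarrow>
     (\<exists>f. bij_betw f (nodes F) (UNIV :: nat list set) \<and>
          (\<forall>x\<in>nodes F. \<forall>y\<in>nodes F. less F x y \<longleftrightarrow> strict_prefix (f x) (f y)))"

definition baire_ftree :: "'x topology \<Rightarrow> ('n, 'x) ftree \<Rightarrow> bool" where
  "baire_ftree X F \<longleftrightarrow> is_tree F \<and> open_in_space X F \<and> locally_strict F \<and> omega_omega F \<and>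
     strict_branches F \<and> leaf F (root F) = topspace X"

definition impl :: "('n, 'x) ftree \<Rightarrow> 'n set" where
  "impl G = nodes G - {root G} - maxs G"

definition is_graft :: "('n, 'x) ftree \<Rightarrow> ('n, 'y) ftree \<Rightarrow> bool" where
  "is_graft G T \<longleftrightarrow>
     is_tree G \<and> (\<exists>a\<in>nodes G. \<exists>b\<in>nodes G. a \<noteq> b) \<and> (\<exists>r. is_root G r) \<and>
     nodes G \<inter> nodes T = {root G} \<union> maxs G \<and>
     (\<forall>x \<in> nodes G \<inter> nodes T. \<forall>y \<in> nodes G \<inter> nodes T. less G x y \<longleftrightarrow> less T x y)"

definition foliage_graft :: "('n, 'x) ftree \<Rightarrow> ('n, 'x) ftree \<Rightarrow> bool" where
  "foliage_graft G F \<longleftrightarrow>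
     is_tree G \<and> nonincreasing G \<and> is_graft G F \<and>
     leaf G (root G) \<subseteq> leaf F (root G) \<and>
     (\<forall>m\<in>maxs G. leaf G m = leaf F m)"

end

theory Submission
  imports Defs
begin

text \<open>Coding the nodes of the Baire tree by finite sequences, the point \<open>p\<close> determines the branch
  of all nodes whose leaf contains \<open>p\<close>; by strictness of branches, the leaves along this branch
  shrink to \<open>{p}\<close>. Below \<open>v\<close>, the sons of the branch nodes that leave the branch therefore have
  pairwise disjoint open leaves covering \<open>F\<^sub>v - {p}\<close>, and there are infinitely many of them.
  Hanging these exit nodes directly below \<open>v\<close> gives the required graft of height 2.\<close>

lemma strict_prefix_snoc_iff_son:
  "(strict_prefix w u \<and> \<not> (\<exists>u'. strict_prefix w u' \<and> strict_prefix u' u)) \<longleftrightarrow> (\<exists>c. u = w @ [c])"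
proof
  assume A: "strict_prefix w u \<and> \<not> (\<exists>u'. strict_prefix w u' \<and> strict_prefix u' u)"
  then obtain d r where u: "u = w @ d # r" by (meson strict_prefixE')
  have "r = []"
  proof (rule ccontr)
    assume "r \<noteq> []"
    hence "strict_prefix w (w @ [d]) \<and> strict_prefix (w @ [d]) u"
      using u by (auto simp: strict_prefix_def prefix_def)
    thus False using A by blast
  qed
  thus "\<exists>c. u = w @ [c]" using u by auto
next
  assume "\<exists>c. u = w @ [c]"
  then obtain c where u: "u = w @ [c]" by blast
  have "\<not> (strict_prefix w u' \<and> strict_prefix u' u)" for u'
    using prefix_length_less[of w u'] prefix_length_less[of u' u] u by auto
  thus "strict_prefix w u \<and> \<not> (\<exists>u'. strict_prefix w u' \<and> strict_prefix u' u)"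
    using u by (auto simp: strict_prefix_def)
qed

lemma strict_prefix_imp_prefix_butlast:
  assumes "strict_prefix u w"
  shows "prefix u (butlast w)"
proof -
  obtain d r where "w = u @ d # r" using assms by (meson strict_prefixE')
  thus ?thesis by (simp add: butlast_append)
qed

locale leaf_partition =
  fixes Lf :: "'c list \<Rightarrow> 'x set"
  assumes Lf_eq_Union_sons: "Lf w = (\<Union>c. Lf (w @ [c]))"
    and Lf_sons_disjoint: "c \<noteq> d \<Longrightarrow> Lf (w @ [c]) \<inter> Lf (w @ [d]) = {}"
begin

lemma Lf_antimono: "prefix u w \<Longrightarrow> Lf w \<subseteq> Lf u"
proof (induction w rule: rev_induct)
  case Nil
  thus ?case by simp
next
  case (snoc c w)
  have "Lf (w @ [c]) \<subseteq> Lf w" using Lf_eq_Union_sons[of w] by blast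
  thus ?case using snoc by auto
qed

lemma Lf_disjoint_if_parallel:
  assumes "u \<parallel> w"
  shows "Lf u \<inter> Lf w = {}"
proof -
  obtain as b bs c cs where bc: "b \<noteq> c" "u = as @ b # bs" "w = as @ c # cs"
    using parallel_decomp[OF assms] by blast
  have "Lf u \<subseteq> Lf (as @ [b])" "Lf w \<subseteq> Lf (as @ [c])"
    using Lf_antimono bc by (auto simp: prefix_def)
  thus ?thesis using Lf_sons_disjoint[OF bc(1), of as] by blast
qed

definition trace :: "'x \<Rightarrow> 'c list set" where
  "trace p = {w. p \<in> Lf w}"

lemma trace_prefix_total: "u \<in> trace p \<Longrightarrow> w \<in> trace p \<Longrightarrow> prefix u w \<or> prefix w u"
  using Lf_disjoint_if_parallel[of u w] unfolding trace_def parallel_def by blast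

lemma trace_has_length:
  assumes "p \<in> Lf a"
  shows "\<exists>w\<in>trace p. length w = n"
proof (induction n)
  case 0
  thus ?case using assms Lf_antimono[of "[]" a] unfolding trace_def by auto
next
  case (Suc n)
  then obtain w where "length w = n" "p \<in> Lf w" unfolding trace_def by blast
  moreover obtain c where "p \<in> Lf (w @ [c])" using \<open>p \<in> Lf w\<close> Lf_eq_Union_sons[of w] by blast
  ultimately show ?case unfolding trace_def by (intro bexI[of _ "w @ [c]"]) auto
qed

definition exits :: "'c list \<Rightarrow> 'x \<Rightarrow> 'c list set" where
  "exits a p = {z. strict_prefix a z \<and> p \<notin> Lf z \<and> p \<in> Lf (butlast z)}"

lemma exits_Lf_subset: "z \<in> exits a p \<Longrightarrow> Lf z \<subseteq> Lf a - {p}"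
  using Lf_antimono[of a z] unfolding exits_def by (auto simp: strict_prefix_def)

lemma exits_prefix_imp_eq:
  assumes "z \<in> exits a p" "z' \<in> exits a p" "prefix z z'"
  shows "z = z'"
proof (rule ccontr)
  assume "z \<noteq> z'"
  hence "prefix z (butlast z')"
    using assms(3) strict_prefix_imp_prefix_butlast by (auto simp: strict_prefix_def)
  thus False using Lf_antimono assms(1,2) unfolding exits_def by blast
qed

lemma exits_disjoint:
  "z \<in> exits a p \<Longrightarrow> z' \<in> exits a p \<Longrightarrow> z \<noteq> z' \<Longrightarrow> Lf z \<inter> Lf z' = {}"
  using exits_prefix_imp_eq Lf_disjoint_if_parallel by (metis parallelI)

lemma strict_prefix_in_exits_iff:
  assumes "u \<in> insert a (exits a p)" "w \<in> insert a (exits a p)"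
  shows "strict_prefix u w \<longleftrightarrow> u = a \<and> w \<in> exits a p"
proof
  assume sp: "strict_prefix u w"
  have "u \<notin> exits a p"
  proof
    assume u: "u \<in> exits a p"
    show False
    proof (cases "w = a")
      case True
      moreover have "strict_prefix a u" using u unfolding exits_def by blast
      ultimately show False using sp prefix_order.less_not_sym by blast
    next
      case False
      hence "w \<in> exits a p" using assms(2) by blast
      thus False using exits_prefix_imp_eq[OF u] sp by (auto simp: strict_prefix_def)
    qed
  qed
  hence "u = a" using assms(1) by blast
  moreover have "w \<noteq> a" using sp \<open>u = a\<close> by simp
  ultimately show "u = a \<and> w \<in> exits a p" using assms(2) by blast
next
  assume "u = a \<and> w \<in> exits a p"
  thus "strict_prefix u w" unfolding exits_def by blast
qed

lemma infinite_exits: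
  assumes "infinite (UNIV :: 'c set)" "p \<in> Lf a"
  shows "infinite (exits a p)"
proof -
  define Cs where "Cs = {c. p \<notin> Lf (a @ [c])}"
  have "UNIV - Cs \<subseteq> {c0}" if "c0 \<in> UNIV - Cs" for c0
    using that Lf_sons_disjoint[of _ c0 a] unfolding Cs_def by blast
  hence "finite (UNIV - Cs)" by (metis finite.emptyI finite_subset finite_insert equals0I)
  hence "infinite Cs" using assms(1) by (metis Diff_infinite_finite)
  moreover have "(\<lambda>c. a @ [c]) ` Cs \<subseteq> exits a p"
    using assms(2) unfolding exits_def Cs_def by (auto simp: strict_prefix_def)
  moreover have "inj (\<lambda>c. a @ [c])" by (auto simp: inj_def)
  ultimately show ?thesis by (metis finite_imageD finite_subset inj_on_subset subset_UNIV)
qed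

lemma exit_containing:
  assumes "q \<in> Lf a"
  shows "p \<in> Lf (a @ r) \<Longrightarrow> q \<notin> Lf (a @ r) \<Longrightarrow> \<exists>z\<in>exits a p. q \<in> Lf z"
proof (induction r rule: rev_induct)
  case Nil
  thus ?case using assms by simp
next
  case (snoc c r)
  have p: "p \<in> Lf (a @ r)" using snoc.prems(1) Lf_antimono[of "a @ r" "a @ r @ [c]"] by auto
  show ?case
  proof (cases "q \<in> Lf (a @ r)")
    case False
    thus ?thesis using snoc.IH p by blast
  next
    case True
    then obtain d where d: "q \<in> Lf (a @ r @ [d])" using Lf_eq_Union_sons[of "a @ r"] by auto
    have "d \<noteq> c" using d snoc.prems(2) by auto
    hence "p \<notin> Lf (a @ r @ [d])" using Lf_sons_disjoint[of d c "a @ r"] snoc.prems(1) by auto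
    hence "a @ r @ [d] \<in> exits a p"
      using p unfolding exits_def by (simp add: strict_prefix_def butlast_append)
    thus ?thesis using d by blast
  qed
qed

lemma Lf_minus_point_eq_Union_exits:
  assumes p: "p \<in> Lf a" and shrink: "(\<Inter>w\<in>trace p. Lf w) = {p}"
  shows "Lf a - {p} = (\<Union>z\<in>exits a p. Lf z)"
proof
  show "(\<Union>z\<in>exits a p. Lf z) \<subseteq> Lf a - {p}" using exits_Lf_subset by blast
next
  show "Lf a - {p} \<subseteq> (\<Union>z\<in>exits a p. Lf z)"
  proof
    fix q assume q: "q \<in> Lf a - {p}"
    then obtain u where u: "u \<in> trace p" "q \<notin> Lf u" using shrink by blast
    have "a \<in> trace p" using p unfolding trace_def by simp
    moreover have "\<not> prefix u a" using Lf_antimono[of u a] u q by blast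
    ultimately obtain r where "u = a @ r" using trace_prefix_total[OF u(1)] prefixE by metis
    thus "q \<in> (\<Union>z\<in>exits a p. Lf z)"
      using exit_containing[of q a p r] q u unfolding trace_def by blast
  qed
qed

end

lemma omega_omega_coding:
  fixes F :: "('n, 'x) ftree"
  assumes "omega_omega F"
  obtains g :: "nat list \<Rightarrow> 'n" where "bij_betw g UNIV (nodes F)"
    "\<And>u w. less F (g u) (g w) \<longleftrightarrow> strict_prefix u w"
proof -
  from assms obtain f where f: "bij_betw f (nodes F) (UNIV :: nat list set)"
    and iso: "\<forall>x\<in>nodes F. \<forall>y\<in>nodes F. less F x y \<longleftrightarrow> strict_prefix (f x) (f y)"
    unfolding omega_omega_def by blast
  define g where "g = inv_into (nodes F) f"
  have "bij_betw g UNIV (nodes F)" unfolding g_def by (rule bij_betw_inv_into[OF f])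
  moreover have "g u \<in> nodes F" "f (g u) = u" for u
    unfolding g_def using f by (auto simp: bij_betw_def inv_into_into f_inv_into_f)
  ultimately show ?thesis using that iso by metis
qed

locale coded_ftree =
  fixes F :: "('n, 'x) ftree" and g :: "nat list \<Rightarrow> 'n"
  assumes g_bij: "bij_betw g UNIV (nodes F)"
    and less_g_iff: "less F (g u) (g w) \<longleftrightarrow> strict_prefix u w"
    and locally_strict: "locally_strict F"
begin

lemma nodes_eq_range: "nodes F = range g"
  using g_bij by (simp add: bij_betw_def)

lemma g_eq_iff: "g u = g w \<longleftrightarrow> u = w"
  using g_bij by (auto simp: bij_betw_def inj_def)

lemma sons_g: "sons F (g w) = range (\<lambda>c. g (w @ [c]))"
proof -
  have "sons F (g w) = g ` {u. strict_prefix w u \<and> \<not> (\<exists>u'. strict_prefix w u' \<and> strict_prefix u' u)}"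
    unfolding sons_def nodes_eq_range by (auto simp: less_g_iff)
  also have "\<dots> = range (\<lambda>c. g (w @ [c]))"
    unfolding strict_prefix_snoc_iff_son by auto
  finally show ?thesis .
qed

sublocale leaf_partition "\<lambda>w. leaf F (g w)"
proof
  fix w :: "nat list"
  have "less F (g w) (g (w @ [0]))" by (simp add: less_g_iff strict_prefix_def)
  hence nonmax: "g w \<in> nodes F - maxs F" using nodes_eq_range unfolding maxs_def by blast
  have "leaf F (g w) = (\<Union>s\<in>sons F (g w). leaf F s)"
    using locally_strict nonmax unfolding locally_strict_def by blast
  thus "leaf F (g w) = (\<Union>c. leaf F (g (w @ [c])))" by (simp add: sons_g image_image)
  fix c d :: nat assume "c \<noteq> d"
  have "\<forall>s\<in>sons F (g w). \<forall>t\<in>sons F (g w). s \<noteq> t \<longrightarrow> leaf F s \<inter> leaf F t = {}"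
    using locally_strict nonmax unfolding locally_strict_def by blast
  moreover have "g (w @ [c]) \<in> sons F (g w)" "g (w @ [d]) \<in> sons F (g w)" by (simp_all add: sons_g)
  moreover have "g (w @ [c]) \<noteq> g (w @ [d])" using \<open>c \<noteq> d\<close> by (simp add: g_eq_iff)
  ultimately show "leaf F (g (w @ [c])) \<inter> leaf F (g (w @ [d])) = {}" by blast
qed

lemma branch_trace:
  assumes "p \<in> leaf F (g a)"
  shows "branch F (g ` trace p)"
  unfolding branch_def
proof (intro conjI allI impI)
  show "chain F (g ` trace p)"
    unfolding chain_def
  proof (intro conjI ballI)
    show "g ` trace p \<subseteq> nodes F" using nodes_eq_range by blast
    fix x y assume "x \<in> g ` trace p" "y \<in> g ` trace p"
    then obtain u w where "x = g u" "y = g w" "u \<in> trace p" "w \<in> trace p" by blast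
    thus "x = y \<or> less F x y \<or> less F y x"
      using trace_prefix_total[of u p w] by (auto simp: less_g_iff strict_prefix_def)
  qed
next
  fix C assume C: "chain F C" "g ` trace p \<subseteq> C"
  show "C = g ` trace p"
  proof
    show "C \<subseteq> g ` trace p"
    proof
      fix x assume "x \<in> C"
      hence "x \<in> range g" using C(1) nodes_eq_range unfolding chain_def by blast
      then obtain u where x: "x = g u" "g u \<in> C" using \<open>x \<in> C\<close> by blast
      obtain w where w: "w \<in> trace p" "length w = length u" using trace_has_length assms by blast
      have "g w \<in> C" using C(2) w(1) by blast
      hence "g u = g w \<or> less F (g u) (g w) \<or> less F (g w) (g u)"
        using C(1) x unfolding chain_def by blast
      hence "u = w \<or> strict_prefix u w \<or> strict_prefix w u" by (simp add: less_g_iff g_eq_iff)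
      hence "u = w" using prefix_length_less w(2) by fastforce
      thus "x \<in> g ` trace p" using x w by blast
    qed
  qed (rule C(2))
qed

lemma trace_shrinks_to_point:
  assumes "strict_branches F" "p \<in> leaf F (g a)"
  shows "(\<Inter>w\<in>trace p. leaf F (g w)) = {p}"
proof -
  obtain q where q: "(\<Inter>x\<in>g ` trace p. leaf F x) = {q}"
    using assms branch_trace unfolding strict_branches_def by blast
  have "p \<in> (\<Inter>x\<in>g ` trace p. leaf F x)" unfolding trace_def by auto
  hence "(\<Inter>x\<in>g ` trace p. leaf F x) = {p}" using q by (metis singletonD)
  thus ?thesis by (simp add: image_image)
qed

end

definition star_ftree :: "'n \<Rightarrow> 'n set \<Rightarrow> ('n \<Rightarrow> 'x set) \<Rightarrow> ('n, 'x) ftree" where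
  "star_ftree r M l = \<lparr>nodes = insert r M, less = (\<lambda>x y. x = r \<and> y \<in> M), leaf = l\<rparr>"

lemma star_ftree_simps [simp]:
  "nodes (star_ftree r M l) = insert r M"
  "less (star_ftree r M l) x y \<longleftrightarrow> x = r \<and> y \<in> M"
  "leaf (star_ftree r M l) = l"
  unfolding star_ftree_def by simp_all

lemma preds_star_ftree: "preds (star_ftree r M l) x = (if x \<in> M then {r} else {})"
  unfolding preds_def by auto

lemma is_tree_star_ftree: "r \<notin> M \<Longrightarrow> is_tree (star_ftree r M l)"
  unfolding is_tree_def preds_star_ftree leq_def by auto

lemma is_root_star_ftree: "is_root (star_ftree r M l) r"
  unfolding is_root_def leq_def by auto

lemma root_star_ftree: "root (star_ftree r M l) = r"
  unfolding root_def
proof (rule the_equality)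
  show "is_root (star_ftree r M l) r" by (rule is_root_star_ftree)
  fix r' assume "is_root (star_ftree r M l) r'"
  thus "r' = r" unfolding is_root_def leq_def by auto
qed

lemma maxs_star_ftree: "r \<notin> M \<Longrightarrow> M \<noteq> {} \<Longrightarrow> maxs (star_ftree r M l) = M"
  unfolding maxs_def by auto

lemma sons_star_ftree_root: "r \<notin> M \<Longrightarrow> sons (star_ftree r M l) r = M"
  unfolding sons_def by auto

lemma impl_star_ftree: "r \<notin> M \<Longrightarrow> M \<noteq> {} \<Longrightarrow> impl (star_ftree r M l) = {}"
  unfolding impl_def root_star_ftree maxs_star_ftree by auto

lemma bounded_chains_star_ftree:
  assumes "r \<notin> M"
  shows "bounded_chains (star_ftree r M l)"
  unfolding bounded_chains_def
proof (intro allI impI)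
  fix C assume C: "chain (star_ftree r M l) C" "C \<noteq> {}"
  show "\<exists>u\<in>nodes (star_ftree r M l). \<forall>c\<in>C. leq (star_ftree r M l) c u"
  proof (cases "C \<inter> M = {}")
    case True
    hence "C \<subseteq> {r}" using C(1) unfolding chain_def by auto
    thus ?thesis unfolding leq_def by auto
  next
    case False
    then obtain m where m: "m \<in> C" "m \<in> M" by blast
    have "leq (star_ftree r M l) c m" if "c \<in> C" for c
      using C(1) m that assms unfolding chain_def leq_def by auto
    thus ?thesis using m(2) by auto
  qed
qed

lemma tree_height_is_star_ftree:
  assumes "r \<notin> M" "M \<noteq> {}"
  shows "tree_height_is (star_ftree r M l) 2"
proof -
  obtain m where "m \<in> M" using assms(2) by blast
  have "card (preds (star_ftree r M l) x) \<le> 1" for x by (simp add: preds_star_ftree)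
  thus ?thesis
    using \<open>m \<in> M\<close> assms(1) unfolding tree_height_is_def node_height_is_def preds_star_ftree
    by (force simp: less_Suc_eq numeral_2_eq_2)
qed

lemma omega_branching_star_ftree:
  "r \<notin> M \<Longrightarrow> infinite M \<Longrightarrow> countable M \<Longrightarrow> omega_branching (star_ftree r M l)"
  unfolding omega_branching_def
  by (auto simp: maxs_star_ftree sons_star_ftree_root infinite_imp_nonempty)

lemma locally_strict_star_ftree:
  assumes "r \<notin> M" "M \<noteq> {}" "l r = (\<Union>m\<in>M. l m)"
    "\<forall>m\<in>M. \<forall>m'\<in>M. m \<noteq> m' \<longrightarrow> l m \<inter> l m' = {}"
  shows "locally_strict (star_ftree r M l)"
proof -
  have "insert r M - M = {r}" using assms(1) by blast
  thus ?thesis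
    using assms unfolding locally_strict_def maxs_star_ftree[OF assms(1,2)]
    by (simp add: sons_star_ftree_root)
qed

lemma foliage_graft_star_ftree:
  assumes "r \<notin> M" "M \<noteq> {}" "insert r M \<subseteq> nodes F"
    and less_F: "\<forall>x\<in>insert r M. \<forall>y\<in>insert r M. less F x y \<longleftrightarrow> x = r \<and> y \<in> M"
    and "l r \<subseteq> leaf F r" "\<forall>m\<in>M. l m = leaf F m \<and> l m \<subseteq> l r"
  shows "foliage_graft (star_ftree r M l) F"
proof -
  have "is_graft (star_ftree r M l) F"
    unfolding is_graft_def
    using assms(1-4) is_tree_star_ftree[OF assms(1)] is_root_star_ftree[of r M l]
    by (auto simp: root_star_ftree maxs_star_ftree)
  moreover have "nonincreasing (star_ftree r M l)"
    using assms(6) unfolding nonincreasing_def leq_def by auto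
  ultimately show ?thesis
    using assms unfolding foliage_graft_def
    by (simp add: is_tree_star_ftree root_star_ftree maxs_star_ftree)
qed

lemma baire_ftree_exit_nodes:
  fixes F :: "('n, 'x) ftree"
  assumes "baire_ftree X F" "v \<in> scope F p"
  obtains M where "v \<notin> M" "M \<subseteq> nodes F" "infinite M" "countable M"
    "\<forall>x\<in>insert v M. \<forall>y\<in>insert v M. less F x y \<longleftrightarrow> x = v \<and> y \<in> M"
    "leaf F v - {p} = (\<Union>m\<in>M. leaf F m)"
    "\<forall>m\<in>M. \<forall>m'\<in>M. m \<noteq> m' \<longrightarrow> leaf F m \<inter> leaf F m' = {}"
proof -
  have F: "locally_strict F" "omega_omega F" "strict_branches F"
    using assms(1) unfolding baire_ftree_def by auto
  obtain g :: "nat list \<Rightarrow> 'n" where "bij_betw g UNIV (nodes F)"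
    "\<And>u w. less F (g u) (g w) \<longleftrightarrow> strict_prefix u w"
    using omega_omega_coding[OF F(2)] by blast
  then interpret coded_ftree F g using F(1) by unfold_locales
  have "v \<in> nodes F" and pv: "p \<in> leaf F v" using assms(2) unfolding scope_def by auto
  then obtain a where v: "v = g a" using nodes_eq_range by blast
  have inj: "inj g" using g_eq_iff by (auto intro: injI)
  have "a \<notin> exits a p" unfolding exits_def by simp
  let ?M = "g ` exits a p"
  show ?thesis
  proof (rule that)
    show "v \<notin> ?M" using \<open>a \<notin> exits a p\<close> v g_eq_iff by auto
    show "?M \<subseteq> nodes F" using nodes_eq_range by blast
    show "infinite ?M"
      using infinite_exits[where a = a and p = p] pv v inj by (simp add: finite_image_iff inj_on_subset)
    show "countable ?M" by simp
    show "\<forall>x\<in>insert v ?M. \<forall>y\<in>insert v ?M. less F x y \<longleftrightarrow> x = v \<and> y \<in> ?M"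
      using strict_prefix_in_exits_iff[where a = a and p = p] \<open>a \<notin> exits a p\<close> v g_eq_iff
      by (auto simp: less_g_iff)
    show "leaf F v - {p} = (\<Union>m\<in>?M. leaf F m)"
      using Lf_minus_point_eq_Union_exits trace_shrinks_to_point[OF F(3)] pv v
      by (simp add: image_image)
    show "\<forall>m\<in>?M. \<forall>m'\<in>?M. m \<noteq> m' \<longrightarrow> leaf F m \<inter> leaf F m' = {}"
      using exits_disjoint by blast
  qed
qed

theorem lemma18:
  fixes X :: "'x topology" and F :: "('n, 'x) ftree" and p :: 'x and v :: 'n
  assumes "baire_ftree X F"
    and "p \<in> topspace X"
    and "v \<in> scope F p"
  shows "\<exists>G :: ('n, 'x) ftree.
     is_tree G \<and>
     (is_root G v \<and> maxs G = sons G (root G)) \<and>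
     (leaf G v = leaf F v - {p} \<and>
      leaf G v = (\<Union>m\<in>maxs G. leaf F m) \<and>
      (\<forall>m\<in>maxs G. \<forall>m'\<in>maxs G. m \<noteq> m' \<longrightarrow> leaf F m \<inter> leaf F m' = {})) \<and>
     foliage_graft G F \<and>
     impl G = {} \<and>
     (omega_branching G \<and> locally_strict G \<and> open_in_space X G \<and>
      bounded_chains G \<and> tree_height_is G 2)"
proof -
  obtain M where M: "v \<notin> M" "M \<subseteq> nodes F" "infinite M" "countable M"
    "\<forall>x\<in>insert v M. \<forall>y\<in>insert v M. less F x y \<longleftrightarrow> x = v \<and> y \<in> M"
    and cover: "leaf F v - {p} = (\<Union>m\<in>M. leaf F m)"
    and disjoint: "\<forall>m\<in>M. \<forall>m'\<in>M. m \<noteq> m' \<longrightarrow> leaf F m \<inter> leaf F m' = {}"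
    using baire_ftree_exit_nodes[OF assms(1,3)] by blast
  have "v \<in> nodes F" using assms(3) unfolding scope_def by auto
  have "M \<noteq> {}" using M(3) by auto
  define l where "l = (leaf F)(v := leaf F v - {p})"
  have l_v: "l v = leaf F v - {p}" and l_M: "\<forall>m\<in>M. l m = leaf F m"
    using M(1) unfolding l_def by auto
  have l_cover: "l v = (\<Union>m\<in>M. l m)" using l_v l_M cover by simp
  have "open_in_space X (star_ftree v M l)"
    using assms(1) M(2) \<open>v \<in> nodes F\<close> l_M l_cover
    unfolding baire_ftree_def open_in_space_def by (auto intro!: openin_Union)
  moreover have "foliage_graft (star_ftree v M l) F"
    using \<open>v \<in> nodes F\<close> M(2) l_v l_M l_cover
    by (intro foliage_graft_star_ftree[OF M(1) \<open>M \<noteq> {}\<close> _ M(5)]) auto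
  moreover have "locally_strict (star_ftree v M l)"
    using l_M disjoint by (intro locally_strict_star_ftree[OF M(1) \<open>M \<noteq> {}\<close> l_cover]) simp
  ultimately show ?thesis
    using M \<open>M \<noteq> {}\<close> l_v l_M cover disjoint
    by (intro exI[of _ "star_ftree v M l"])
      (simp add: is_tree_star_ftree is_root_star_ftree root_star_ftree maxs_star_ftree
        sons_star_ftree_root impl_star_ftree omega_branching_star_ftree bounded_chains_star_ftree
        tree_height_is_star_ftree)
qed

end
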